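(* Let $b,\omega:\mathbb{R}\to\mathbb{R}$ be continuous with $0<b_0\le b(t)\le b_1$ and $0\le\omega_0\le\omega(t)\le\omega_1<\pi^2$. If $\gamma$ is a non-negative bounded complete trajectory of (P) such that $\gamma(t)\to0$ in $L^2(0,1)$ as $t\to-\infty$, then for every $t_1\in\mathbb{R}$ there exists $t_0\le t_1$ with $\gamma(t_0)\notin D$. If additionally $b,\omega\in W^{1,2}_{loc}(\mathbb{R})$, the same conclusion holds for every bounded complete trajectory $\gamma$ (not necessarily non-negative) with $\gamma(t)\to0$ as $t\to-\infty$.
   Context: $H=L^2(0,1)$, $V=H_0^1(0,1)$, $A=-d^2/dx^2$, $D(A)=H^2(0,1)\cap V$, $H_0(s)=\{-1\}$ ($s<0$), $[-1,1]$ ($s=0$), $\{1\}$ ($s>0$). Problem (P) with initial time $\tau$: $\partial_t u-\partial_{xx}u\in b(t)H_0(u)+\omega(t)u$ on $(\tau,\infty)\times(0,1)$, Dirichlet conditions, $u(\tau)=u_\tau$. A solution is $u\in C([\tau,\infty),H)$ with $u(\tau)=u_\tau$, absolutely continuous on each $[T_1,T_2]$, $\tau<T_1<T_2$, $u(t)\in D(A)$ a.e., with some $r\in L^2_{loc}(\tau,\infty;H)$, $r(t)(x)\in b(t)H_0(u(t)(x))+\omega(t)u(t)(x)$ a.e., $du/dt+Au=r$ a.e. A complete trajectory is $\gamma:\mathbb{R}\to H$ whose restriction to each $[\tau,\infty)$ is a solution with initial time $\tau$; bounded if its range is bounded in $H$; non-negative if $\gamma(t)\ge0$ a.e. for all $t$.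 $D=\{v\in V: v(x)>0\ \forall x\in(0,1)\}$. *)

theory Defs
  imports "HOL-Analysis.Analysis"
begin

text \<open>Elements of H = L^2(0,1) are represented by functions real => real
  (representatives); identity in H is equality a.e. on (0,1).\<close>

definition sq_int :: "(real \<Rightarrow> real) \<Rightarrow> bool" where
  "sq_int f \<longleftrightarrow> set_borel_measurable lborel {0<..<1} f
     \<and> set_integrable lborel {0<..<1} (\<lambda>x. (f x)\<^sup>2)"

definition L2nrm :: "(real \<Rightarrow> real) \<Rightarrow> real" where
  "L2nrm f = sqrt (LBINT x:{0<..<1}. (f x)\<^sup>2)"

definition prim :: "(real \<Rightarrow> real) \<Rightarrow> real \<Rightarrow> real" where
  "prim g x = (LBINT s=0..x. g s)"

text \<open>F is the continuous representative of f in V = H_0^1(0,1).\<close>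
definition V_rep :: "(real \<Rightarrow> real) \<Rightarrow> (real \<Rightarrow> real) \<Rightarrow> bool" where
  "V_rep f F \<longleftrightarrow> (\<exists>g. sq_int g \<and> F = prim g \<and> F 1 = 0)
     \<and> (AE x in lborel. 0 < x \<and> x < 1 \<longrightarrow> f x = F x)"

text \<open>f in D(A) = H^2 \<inter> H_0^1 with second derivative h, i.e. A f = - h.\<close>
definition DA_lap :: "(real \<Rightarrow> real) \<Rightarrow> (real \<Rightarrow> real) \<Rightarrow> bool" where
  "DA_lap f h \<longleftrightarrow> sq_int h \<and> (\<exists>c. prim (\<lambda>y. c + prim h y) 1 = 0
     \<and> (AE x in lborel. 0 < x \<and> x < 1 \<longrightarrow> f x = prim (\<lambda>y. c + prim h y) x))"

definition in_D :: "(real \<Rightarrow> real) \<Rightarrow> bool" where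
  "in_D f \<longleftrightarrow> (\<exists>F. V_rep f F \<and> (\<forall>x. 0 < x \<and> x < 1 \<longrightarrow> F x > 0))"

definition Hsign :: "real \<Rightarrow> real \<Rightarrow> bool" where
  "Hsign s y \<longleftrightarrow> (s < 0 \<and> y = -1) \<or> (s = 0 \<and> -1 \<le> y \<and> y \<le> 1) \<or> (s > 0 \<and> y = 1)"

definition H_abs_cont :: "(real \<Rightarrow> real \<Rightarrow> real) \<Rightarrow> real \<Rightarrow> real \<Rightarrow> bool" where
  "H_abs_cont u T1 T2 \<longleftrightarrow> (\<forall>\<epsilon>>0. \<exists>\<delta>>0. \<forall>(n::nat) (a::nat \<Rightarrow> real) c.
     (\<forall>i<n. T1 \<le> a i \<and> a i \<le> c i \<and> c i \<le> T2)
     \<and> (\<forall>i<n. \<forall>j<n. i \<noteq> j \<longrightarrow> c i \<le> a j \<or> c j \<le> a i)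
     \<and> (\<Sum>i<n. c i - a i) < \<delta>
     \<longrightarrow> (\<Sum>i<n. L2nrm (\<lambda>x. u (c i) x - u (a i) x)) < \<epsilon>)"

definition has_H_deriv :: "(real \<Rightarrow> real \<Rightarrow> real) \<Rightarrow> (real \<Rightarrow> real) \<Rightarrow> real \<Rightarrow> bool" where
  "has_H_deriv u v t \<longleftrightarrow>
     ((\<lambda>s. L2nrm (\<lambda>x. (u s x - u t x) / (s - t) - v x)) \<longlongrightarrow> 0) (at t)"

text \<open>r in L^2_loc(tau,infinity; H), identified with L^2 on compact [T1,T2] x (0,1).\<close>
definition L2loc_H :: "real \<Rightarrow> (real \<Rightarrow> real \<Rightarrow> real) \<Rightarrow> bool" where
  "L2loc_H \<tau> r \<longleftrightarrow> (\<lambda>(t, x). r t x) \<in> borel_measurable (lborel \<Otimes>\<^sub>M lborel)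
     \<and> (\<forall>T1 T2. \<tau> < T1 \<and> T1 < T2 \<longrightarrow>
          set_integrable (lborel \<Otimes>\<^sub>M lborel) ({T1..T2} \<times> {0<..<1}) (\<lambda>(t, x). (r t x)\<^sup>2))"

definition is_solution ::
  "(real \<Rightarrow> real) \<Rightarrow> (real \<Rightarrow> real) \<Rightarrow> real \<Rightarrow> (real \<Rightarrow> real) \<Rightarrow> (real \<Rightarrow> real \<Rightarrow> real) \<Rightarrow> bool" where
  "is_solution b \<omega> \<tau> u\<^sub>\<tau> u \<longleftrightarrow>
     (\<forall>t\<ge>\<tau>. sq_int (u t))
     \<and> (\<forall>t\<ge>\<tau>. ((\<lambda>s. L2nrm (\<lambda>x. u s x - u t x)) \<longlongrightarrow> 0) (at t within {\<tau>..}))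
     \<and> sq_int u\<^sub>\<tau> \<and> L2nrm (\<lambda>x. u \<tau> x - u\<^sub>\<tau> x) = 0
     \<and> (\<forall>T1 T2. \<tau> < T1 \<and> T1 < T2 \<longrightarrow> H_abs_cont u T1 T2)
     \<and> (\<exists>r. L2loc_H \<tau> r
          \<and> (AE t in lborel. \<tau> < t \<longrightarrow>
               (AE x in lborel. 0 < x \<and> x < 1 \<longrightarrow>
                  (\<exists>y. Hsign (u t x) y \<and> r t x = b t * y + \<omega> t * u t x)))
          \<and> (AE t in lborel. \<tau> < t \<longrightarrow>
               (\<exists>h. DA_lap (u t) h \<and> has_H_deriv u (\<lambda>x. r t x + h x) t)))"

definition complete_traj ::
  "(real \<Rightarrow> real) \<Rightarrow> (real \<Rightarrow> real) \<Rightarrow> (real \<Rightarrow> real \<Rightarrow> real) \<Rightarrow> bool" where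
  "complete_traj b \<omega> \<gamma> \<longleftrightarrow> (\<forall>\<tau>. is_solution b \<omega> \<tau> (\<gamma> \<tau>) \<gamma>)"

definition bounded_traj :: "(real \<Rightarrow> real \<Rightarrow> real) \<Rightarrow> bool" where
  "bounded_traj \<gamma> \<longleftrightarrow> (\<exists>M. \<forall>t. L2nrm (\<gamma> t) \<le> M)"

definition nonneg_traj :: "(real \<Rightarrow> real \<Rightarrow> real) \<Rightarrow> bool" where
  "nonneg_traj \<gamma> \<longleftrightarrow> (\<forall>t. AE x in lborel. 0 < x \<and> x < 1 \<longrightarrow> \<gamma> t x \<ge> 0)"

definition W12loc :: "(real \<Rightarrow> real) \<Rightarrow> bool" where
  "W12loc f \<longleftrightarrow> (\<exists>g. g \<in> borel_measurable lborel
     \<and> (\<forall>a c. set_integrable lborel {a..c} (\<lambda>s. (g s)\<^sup>2))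
     \<and> (\<forall>t. f t = f 0 + (LBINT s=0..t. g s)))"

end

theory Submission
  imports Defs
begin

text \<open>
  Pair the trajectory with the torsion function \<open>x (1 - x)\<close> and call the result \<open>Y t\<close>.
  While \<open>\<gamma>\<close> stays in \<open>D\<close> it is positive, so the Heaviside term equals \<open>b\<close>, \<open>Y \<ge> 0\<close>, and
  integrating by parts twice gives \<open>Y' = b / 6 + \<omega> Y - 2 \<integral> \<gamma>\<close> almost everywhere. As
  \<open>\<gamma> t \<rightarrow> 0\<close> in \<open>L\<^sup>2\<close> for \<open>t \<rightarrow> -\<infinity>\<close>, the last term is eventually below \<open>b0 / 12\<close>, so
  \<open>Y' \<ge> b0 / 12\<close> on a half-line \<open>(-\<infinity>, T]\<close>. Since \<open>Y\<close> is absolutely continuous, this gives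
  \<open>Y T - Y s \<ge> b0 / 12 (T - s)\<close>, which contradicts \<open>Y s \<ge> 0\<close> for \<open>s\<close> far in the past.
\<close>

section \<open>Absolute continuity of real functions\<close>

definition abs_continuous_on :: "real \<Rightarrow> real \<Rightarrow> (real \<Rightarrow> real) \<Rightarrow> bool" where
  "abs_continuous_on a b f \<longleftrightarrow> (\<forall>\<epsilon>>0. \<exists>\<delta>>0. \<forall>(n::nat) (p::nat \<Rightarrow> real) q.
     (\<forall>i<n. a \<le> p i \<and> p i \<le> q i \<and> q i \<le> b)
     \<and> (\<forall>i<n. \<forall>j<n. i \<noteq> j \<longrightarrow> q i \<le> p j \<or> q j \<le> p i)
     \<and> (\<Sum>i<n. q i - p i) < \<delta>
     \<longrightarrow> (\<Sum>i<n. \<bar>f (q i) - f (p i)\<bar>) < \<epsilon>)"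

lemma abs_continuous_onI:
  assumes "\<And>\<epsilon>. 0 < \<epsilon> \<Longrightarrow> \<exists>\<delta>>0. \<forall>(n::nat) p q.
     (\<forall>i<n. a \<le> p i \<and> p i \<le> q i \<and> q i \<le> b)
     \<longrightarrow> (\<forall>i<n. \<forall>j<n. i \<noteq> j \<longrightarrow> q i \<le> p j \<or> q j \<le> p i)
     \<longrightarrow> (\<Sum>i<n. q i - p i) < \<delta>
     \<longrightarrow> (\<Sum>i<n. \<bar>f (q i) - f (p i)\<bar>) < \<epsilon>"
  shows "abs_continuous_on a b f"
  using assms unfolding abs_continuous_on_def imp_conjL by simp

lemma abs_continuous_onE:
  assumes "abs_continuous_on a b f" "0 < \<epsilon>"
  obtains \<delta> where "0 < \<delta>"
    "\<And>(n::nat) p q. \<forall>i<n. a \<le> p i \<and> p i \<le> q i \<and> q i \<le> b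
      \<Longrightarrow> \<forall>i<n. \<forall>j<n. i \<noteq> j \<longrightarrow> q i \<le> p j \<or> q j \<le> p i
      \<Longrightarrow> (\<Sum>i<n. q i - p i) < \<delta>
      \<Longrightarrow> (\<Sum>i<n. \<bar>f (q i) - f (p i)\<bar>) < \<epsilon>"
  using assms unfolding abs_continuous_on_def imp_conjL by blast

lemma abs_continuous_on_add:
  assumes f: "abs_continuous_on a b f" and g: "abs_continuous_on a b g"
  shows "abs_continuous_on a b (\<lambda>t. f t + g t)"
proof (rule abs_continuous_onI)
  fix \<epsilon> :: real assume "0 < \<epsilon>"
  then have "0 < \<epsilon> / 2" by simp
  obtain \<delta>f where "0 < \<delta>f" and \<delta>f: "\<And>(n::nat) p q. \<forall>i<n. a \<le> p i \<and> p i \<le> q i \<and> q i \<le> b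
      \<Longrightarrow> \<forall>i<n. \<forall>j<n. i \<noteq> j \<longrightarrow> q i \<le> p j \<or> q j \<le> p i
      \<Longrightarrow> (\<Sum>i<n. q i - p i) < \<delta>f \<Longrightarrow> (\<Sum>i<n. \<bar>f (q i) - f (p i)\<bar>) < \<epsilon> / 2"
    using abs_continuous_onE[OF f \<open>0 < \<epsilon> / 2\<close>] by blast
  obtain \<delta>g where "0 < \<delta>g" and \<delta>g: "\<And>(n::nat) p q. \<forall>i<n. a \<le> p i \<and> p i \<le> q i \<and> q i \<le> b
      \<Longrightarrow> \<forall>i<n. \<forall>j<n. i \<noteq> j \<longrightarrow> q i \<le> p j \<or> q j \<le> p i
      \<Longrightarrow> (\<Sum>i<n. q i - p i) < \<delta>g \<Longrightarrow> (\<Sum>i<n. \<bar>g (q i) - g (p i)\<bar>) < \<epsilon> / 2"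
    using abs_continuous_onE[OF g \<open>0 < \<epsilon> / 2\<close>] by blast
  show "\<exists>\<delta>>0. \<forall>(n::nat) p q. (\<forall>i<n. a \<le> p i \<and> p i \<le> q i \<and> q i \<le> b)
     \<longrightarrow> (\<forall>i<n. \<forall>j<n. i \<noteq> j \<longrightarrow> q i \<le> p j \<or> q j \<le> p i)
     \<longrightarrow> (\<Sum>i<n. q i - p i) < \<delta>
     \<longrightarrow> (\<Sum>i<n. \<bar>f (q i) + g (q i) - (f (p i) + g (p i))\<bar>) < \<epsilon>"
  proof (intro exI[of _ "min \<delta>f \<delta>g"] conjI allI impI)
    fix n :: nat and p q :: "nat \<Rightarrow> real"
    assume pq: "\<forall>i<n. a \<le> p i \<and> p i \<le> q i \<and> q i \<le> b"
      "\<forall>i<n. \<forall>j<n. i \<noteq> j \<longrightarrow> q i \<le> p j \<or> q j \<le> p i" and small: "(\<Sum>i<n. q i - p i) < min \<delta>f \<delta>g"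
    have "(\<Sum>i<n. \<bar>f (q i) - f (p i)\<bar>) < \<epsilon> / 2" "(\<Sum>i<n. \<bar>g (q i) - g (p i)\<bar>) < \<epsilon> / 2"
      using \<delta>f[OF pq] \<delta>g[OF pq] small by simp_all
    then have "(\<Sum>i<n. \<bar>f (q i) - f (p i)\<bar>) + (\<Sum>i<n. \<bar>g (q i) - g (p i)\<bar>) < \<epsilon>"
      by simp
    moreover have "(\<Sum>i<n. \<bar>f (q i) + g (q i) - (f (p i) + g (p i))\<bar>)
        \<le> (\<Sum>i<n. \<bar>f (q i) - f (p i)\<bar>) + (\<Sum>i<n. \<bar>g (q i) - g (p i)\<bar>)"
      by (simp add: sum.distrib[symmetric] sum_mono)
    ultimately show "(\<Sum>i<n. \<bar>f (q i) + g (q i) - (f (p i) + g (p i))\<bar>) < \<epsilon>"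
      by linarith
  qed (use \<open>0 < \<delta>f\<close> \<open>0 < \<delta>g\<close> in auto)
qed

lemma abs_continuous_on_linear: "abs_continuous_on a b (\<lambda>t. c * t)"
proof (rule abs_continuous_onI)
  fix \<epsilon> :: real assume "0 < \<epsilon>"
  show "\<exists>\<delta>>0. \<forall>(n::nat) p q. (\<forall>i<n. a \<le> p i \<and> p i \<le> q i \<and> q i \<le> b)
     \<longrightarrow> (\<forall>i<n. \<forall>j<n. i \<noteq> j \<longrightarrow> q i \<le> p j \<or> q j \<le> p i)
     \<longrightarrow> (\<Sum>i<n. q i - p i) < \<delta>
     \<longrightarrow> (\<Sum>i<n. \<bar>c * q i - c * p i\<bar>) < \<epsilon>"
  proof (intro exI[of _ "\<epsilon> / (\<bar>c\<bar> + 1)"] conjI allI impI)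
    fix n :: nat and p q :: "nat \<Rightarrow> real"
    assume pq: "\<forall>i<n. a \<le> p i \<and> p i \<le> q i \<and> q i \<le> b" and small: "(\<Sum>i<n. q i - p i) < \<epsilon> / (\<bar>c\<bar> + 1)"
    have "(\<Sum>i<n. \<bar>c * q i - c * p i\<bar>) = \<bar>c\<bar> * (\<Sum>i<n. q i - p i)"
      using pq by (simp add: sum_distrib_left abs_mult flip: right_diff_distrib)
    also have "\<dots> \<le> (\<bar>c\<bar> + 1) * (\<Sum>i<n. q i - p i)"
      using pq by (intro mult_right_mono sum_nonneg) auto
    also have "\<dots> < \<epsilon>"
      using small by (simp add: pos_less_divide_eq mult.commute add_pos_nonneg)
    finally show "(\<Sum>i<n. \<bar>c * q i - c * p i\<bar>) < \<epsilon>" .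
  qed (use \<open>0 < \<epsilon>\<close> in \<open>simp add: add_pos_nonneg\<close>)
qed

lemma has_real_derivative_straddle:
  assumes "(f has_real_derivative d) (at t)" "0 < e"
  obtains r where "0 < r"
    "\<And>u v. t - r < u \<Longrightarrow> u \<le> t \<Longrightarrow> t \<le> v \<Longrightarrow> v < t + r \<Longrightarrow> (d - e) * (v - u) \<le> f v - f u"
proof -
  have "\<forall>\<^sub>F y in at t. dist ((f y - f t) / (y - t)) d < e"
    using assms by (simp add: has_field_derivative_iff tendsto_iff)
  then obtain r where "0 < r"
    and r: "\<And>y. y \<noteq> t \<Longrightarrow> dist y t < r \<Longrightarrow> \<bar>(f y - f t) / (y - t) - d\<bar> < e"
    by (auto simp: eventually_at dist_real_def)
  have near: "\<bar>f y - f t - d * (y - t)\<bar> \<le> e * \<bar>y - t\<bar>" if "\<bar>y - t\<bar> < r" for y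
  proof (cases "y = t")
    case False
    have "\<bar>f y - f t - d * (y - t)\<bar> = \<bar>(f y - f t) / (y - t) - d\<bar> * \<bar>y - t\<bar>"
      using False by (simp add: abs_mult[symmetric] field_simps)
    also have "\<dots> \<le> e * \<bar>y - t\<bar>"
      using r[OF False] that by (intro mult_right_mono) (auto simp: dist_real_def)
    finally show ?thesis .
  qed simp
  show ?thesis
  proof (rule that[OF \<open>0 < r\<close>])
    fix u v assume "t - r < u" "u \<le> t" "t \<le> v" "v < t + r"
    then have "\<bar>u - t\<bar> < r" "\<bar>v - t\<bar> < r" by auto
    with near have "\<bar>f u - f t - d * (u - t)\<bar> \<le> e * (t - u)" "\<bar>f v - f t - d * (v - t)\<bar> \<le> e * (v - t)"
      using \<open>u \<le> t\<close> \<open>t \<le> v\<close> by (metis abs_minus_commute abs_of_nonneg diff_ge_0_iff_ge)+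
    moreover have "(d - e) * (v - u) = d * (v - t) - d * (u - t) - e * (v - t) - e * (t - u)"
      by (simp add: algebra_simps)
    ultimately show "(d - e) * (v - u) \<le> f v - f u"
      by (simp only: abs_le_iff) linarith
  qed
qed

lemma tagged_partial_division_interval_real:
  fixes a b :: real
  assumes "p tagged_partial_division_of {a..b}" "(x, K) \<in> p"
  obtains u v where "K = {u..v}" "a \<le> u" "u \<le> x" "x \<le> v" "v \<le> b"
proof -
  obtain u v where K: "K = {u..v}"
    using tagged_partial_division_ofD(4)[OF assms] by (metis cbox_interval)
  moreover have "x \<in> K" "K \<subseteq> {a..b}"
    using tagged_partial_division_ofD(2,3)[OF assms] by auto
  ultimately show ?thesis using that by auto
qed

lemma tagged_partial_division_Inf_le_Sup:
  fixes a b :: real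
  assumes "p tagged_partial_division_of {a..b}" "(x, K) \<in> p"
  shows "Inf K \<le> Sup K"
  using assms by (rule tagged_partial_division_interval_real) auto

lemma abs_continuous_on_tagged_partial_division:
  assumes "abs_continuous_on a b f" "0 < \<epsilon>"
  obtains \<delta> where "0 < \<delta>"
    "\<And>p. p tagged_partial_division_of {a..b} \<Longrightarrow> (\<Sum>(x, K)\<in>p. Sup K - Inf K) < \<delta>
      \<Longrightarrow> (\<Sum>(x, K)\<in>p. \<bar>f (Sup K) - f (Inf K)\<bar>) < \<epsilon>"
proof -
  obtain \<delta> where "0 < \<delta>" and \<delta>: "\<And>(n::nat) l u. \<forall>i<n. a \<le> l i \<and> l i \<le> u i \<and> u i \<le> b
      \<Longrightarrow> \<forall>i<n. \<forall>j<n. i \<noteq> j \<longrightarrow> u i \<le> l j \<or> u j \<le> l i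
      \<Longrightarrow> (\<Sum>i<n. u i - l i) < \<delta> \<Longrightarrow> (\<Sum>i<n. \<bar>f (u i) - f (l i)\<bar>) < \<epsilon>"
    using abs_continuous_onE[OF assms] by blast
  have "(\<Sum>(x, K)\<in>p. \<bar>f (Sup K) - f (Inf K)\<bar>) < \<epsilon>"
    if p: "p tagged_partial_division_of {a..b}" and small: "(\<Sum>(x, K)\<in>p. Sup K - Inf K) < \<delta>" for p
  proof -
    define p' where "p' = {xK \<in> p. Inf (snd xK) < Sup (snd xK)}"
    have "finite p" using tagged_partial_division_ofD(1)[OF p] .
    then have "finite p'" "p' \<subseteq> p" by (auto simp: p'_def)
    have degenerate: "Sup K = Inf K" if "(x, K) \<in> p - p'" for x K
      using that tagged_partial_division_Inf_le_Sup[OF p, of x K] by (auto simp: p'_def)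
    obtain g where g: "bij_betw g {..<card p'} p'"
      using ex_bij_betw_nat_finite[OF \<open>finite p'\<close>] by (auto simp: atLeast0LessThan)
    define l where "l i = Inf (snd (g i))" for i
    define u where "u i = Sup (snd (g i))" for i
    have gp: "g i \<in> p" "l i < u i" "snd (g i) = {l i..u i}" "a \<le> l i" "u i \<le> b"
      if "i < card p'" for i
    proof -
      have "g i \<in> p" "l i < u i"
        using bij_betwE[OF g] that by (auto simp: p'_def l_def u_def)
      moreover obtain c d where "snd (g i) = {c..d}" "a \<le> c" "c \<le> d" "d \<le> b"
        using tagged_partial_division_interval_real[OF p, of "fst (g i)" "snd (g i)"] \<open>g i \<in> p\<close>
        by (metis order.trans prod.collapse)
      ultimately show "g i \<in> p" "l i < u i" "snd (g i) = {l i..u i}" "a \<le> l i" "u i \<le> b"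
        by (auto simp: l_def u_def)
    qed
    have "(\<Sum>i<card p'. \<bar>f (u i) - f (l i)\<bar>) < \<epsilon>"
    proof (rule \<delta>)
      show "\<forall>i<card p'. a \<le> l i \<and> l i \<le> u i \<and> u i \<le> b"
        using gp by fastforce
      show "\<forall>i<card p'. \<forall>j<card p'. i \<noteq> j \<longrightarrow> u i \<le> l j \<or> u j \<le> l i"
      proof (intro allI impI)
        fix i j assume ij: "i < card p'" "j < card p'" "i \<noteq> j"
        then have "g i \<noteq> g j" using bij_betw_imp_inj_on[OF g] by (auto dest: inj_onD)
        then have "interior (snd (g i)) \<inter> interior (snd (g j)) = {}"
          using tagged_partial_division_ofD(5)[OF p, of "fst (g i)" "snd (g i)" "fst (g j)" "snd (g j)"]
            gp(1)[OF ij(1)] gp(1)[OF ij(2)] by (simp add: prod_eq_iff)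
        then have "{l i<..<u i} \<inter> {l j<..<u j} = {}"
          using gp(3)[OF ij(1)] gp(3)[OF ij(2)] by (simp add: interior_atLeastAtMost_real)
        moreover have "(max (l i) (l j) + min (u i) (u j)) / 2 \<in> {l i<..<u i} \<inter> {l j<..<u j}"
          if "l j < u i" "l i < u j"
          using that gp(2)[OF ij(1)] gp(2)[OF ij(2)] by auto
        ultimately show "u i \<le> l j \<or> u j \<le> l i" by force
      qed
      have "(\<Sum>i<card p'. u i - l i) = (\<Sum>(x, K)\<in>p'. Sup K - Inf K)"
        using sum.reindex_bij_betw[OF g, of "\<lambda>(x, K). Sup K - Inf K"]
        by (simp add: l_def u_def case_prod_beta)
      also have "\<dots> \<le> (\<Sum>(x, K)\<in>p. Sup K - Inf K)"
        using \<open>finite p\<close> \<open>p' \<subseteq> p\<close> tagged_partial_division_Inf_le_Sup[OF p] by (intro sum_mono2) auto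
      finally show "(\<Sum>i<card p'. u i - l i) < \<delta>" using small by linarith
    qed
    also have "(\<Sum>i<card p'. \<bar>f (u i) - f (l i)\<bar>) = (\<Sum>(x, K)\<in>p'. \<bar>f (Sup K) - f (Inf K)\<bar>)"
      using sum.reindex_bij_betw[OF g, of "\<lambda>(x, K). \<bar>f (Sup K) - f (Inf K)\<bar>"]
      by (simp add: l_def u_def case_prod_beta)
    also have "\<dots> = (\<Sum>(x, K)\<in>p. \<bar>f (Sup K) - f (Inf K)\<bar>)"
      using \<open>finite p\<close> \<open>p' \<subseteq> p\<close> degenerate by (intro sum.mono_neutral_left) auto
    finally show ?thesis .
  qed
  with \<open>0 < \<delta>\<close> show ?thesis using that by blast
qed

lemma tagged_partial_division_length_le_measure:
  fixes a b :: real
  assumes p: "p tagged_partial_division_of {a..b}"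
    and G: "G \<in> lmeasurable" "\<And>x K. (x, K) \<in> p \<Longrightarrow> K \<subseteq> G"
  shows "(\<Sum>(x, K)\<in>p. Sup K - Inf K) \<le> measure lebesgue G"
proof -
  have "Sup K - Inf K = measure lebesgue K" if xK: "(x, K) \<in> p" for x K
  proof -
    obtain u v where "K = {u..v}" "u \<le> v"
      using tagged_partial_division_interval_real[OF p xK] by (metis order.trans)
    then show ?thesis by simp
  qed
  then have "(\<Sum>(x, K)\<in>p. Sup K - Inf K) = (\<Sum>(x, K)\<in>p. measure lebesgue K)"
    by (intro sum.cong) auto
  also have "\<dots> = (\<Sum>K\<in>snd ` p. measure lebesgue K)"
  proof (rule sum.over_tagged_division_lemma[OF tagged_partial_division_of_Union_self[OF p]])
    fix u v :: real assume "box u v = {}"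
    then show "measure lebesgue (cbox u v) = 0"
      by (simp add: content_eq_0_interior)
  qed
  also have "\<dots> = measure lebesgue (\<Union>(snd ` p))"
    by (rule content_division[OF partial_division_of_tagged_division[OF p]])
  also have "\<dots> \<le> measure lebesgue G"
  proof (rule measure_mono_fmeasurable)
    show "\<Union>(snd ` p) \<subseteq> G" using G(2) by force
  qed (use lmeasurable_division[OF partial_division_of_tagged_division[OF p]] G in auto)
  finally show ?thesis .
qed

lemma null_set_open_cover:
  assumes "E \<in> null_sets lborel" "0 < \<delta>"
  obtains G where "open G" "E \<subseteq> G" "G \<in> lmeasurable" "measure lebesgue G < \<delta>"
proof -
  have "E \<in> sets borel" using null_setsD2[OF assms(1)] by simp
  then obtain G where "open G" "E \<subseteq> G" and G\<delta>: "emeasure lborel (G - E) < \<delta>"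
    using \<open>0 < \<delta>\<close> by (rule outer_regular_lborel)
  have "emeasure lborel G < \<delta>"
    using G\<delta> emeasure_Diff_null_set[OF assms(1), of G] \<open>open G\<close> by simp
  moreover have "G \<in> sets lborel" using \<open>open G\<close> by simp
  ultimately have "emeasure lebesgue G < \<delta>" by simp
  moreover have "ennreal \<delta> < top" by simp
  ultimately have "emeasure lebesgue G < top" by (rule order.strict_trans)
  then have "G \<in> lmeasurable" "measure lebesgue G < \<delta>"
    using \<open>G \<in> sets lborel\<close> \<open>emeasure lebesgue G < \<delta>\<close>
    by (auto intro!: fmeasurableI simp: measure_def)
  with \<open>open G\<close> \<open>E \<subseteq> G\<close> show ?thesis by (rule that)
qed

lemma gauge_straddle_off_null_set:
  assumes "open G" "E \<subseteq> G" "0 < e"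
    and deriv: "\<forall>t\<in>{a<..<b} - E. \<exists>d\<ge>0. (f has_real_derivative d) (at t)"
  obtains R where "\<And>t. 0 < R t" "\<And>t. t \<in> E \<Longrightarrow> ball t (R t) \<subseteq> G"
    "\<And>t u v. t \<notin> E \<Longrightarrow> a < t \<Longrightarrow> t < b \<Longrightarrow> t - R t < u \<Longrightarrow> u \<le> t \<Longrightarrow> t \<le> v \<Longrightarrow> v < t + R t
      \<Longrightarrow> - e * (v - u) \<le> f v - f u"
proof -
  define good where "good t r \<longleftrightarrow> (t \<in> E \<longrightarrow> ball t r \<subseteq> G) \<and> (t \<notin> E \<and> a < t \<and> t < b \<longrightarrow>
      (\<forall>u v. t - r < u \<longrightarrow> u \<le> t \<longrightarrow> t \<le> v \<longrightarrow> v < t + r \<longrightarrow> - e * (v - u) \<le> f v - f u))" for t r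
  have "\<exists>r>0. good t r" for t
  proof (cases "t \<in> E")
    case True
    then show ?thesis using \<open>open G\<close> \<open>E \<subseteq> G\<close> open_contains_ball by (auto simp: good_def)
  next
    case False
    show ?thesis
    proof (cases "a < t \<and> t < b")
      case True
      with \<open>t \<notin> E\<close> have "t \<in> {a<..<b} - E" by simp
      then obtain d where "d \<ge> 0" and fd: "(f has_real_derivative d) (at t)"
        using deriv by blast
      obtain r where "0 < r" and r: "\<And>u v. t - r < u \<Longrightarrow> u \<le> t \<Longrightarrow> t \<le> v \<Longrightarrow> v < t + r
          \<Longrightarrow> (d - e) * (v - u) \<le> f v - f u"
        by (rule has_real_derivative_straddle[OF fd \<open>0 < e\<close>]) (rule that)
      have "- e * (v - u) \<le> f v - f u" if "t - r < u" "u \<le> t" "t \<le> v" "v < t + r" for u v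
        using r[OF that] \<open>d \<ge> 0\<close> that mult_right_mono[of 0 d "v - u"] by (simp add: algebra_simps)
      with \<open>0 < r\<close> \<open>t \<notin> E\<close> show ?thesis by (auto simp: good_def)
    next
      case False
      with \<open>t \<notin> E\<close> show ?thesis by (intro exI[of _ 1]) (auto simp: good_def)
    qed
  qed
  then obtain R where "\<And>t. 0 < R t" "\<And>t. good t (R t)" by metis
  then show ?thesis by (intro that[of R]) (auto simp: good_def)
qed

text \<open>Cousin's lemma splits a fine tagged division of \<open>[a, b]\<close> into the intervals tagged in the
  null set \<open>E\<close>, which lie in a small open set and hence contribute little by absolute continuity,
  and the remaining intervals, on each of which the increment of \<open>f\<close> is almost nonnegative.\<close>

lemma abs_continuous_on_increment_ge:
  assumes "a \<le> b" and ac: "abs_continuous_on a b f" and E: "E \<in> null_sets lborel" "a \<in> E" "b \<in> E"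
    and deriv: "\<forall>t\<in>{a<..<b} - E. \<exists>d\<ge>0. (f has_real_derivative d) (at t)"
    and "0 < e"
  shows "- e * (1 + (b - a)) \<le> f b - f a"
proof -
  obtain \<delta> where "0 < \<delta>" and \<delta>: "\<And>p. p tagged_partial_division_of {a..b}
      \<Longrightarrow> (\<Sum>(x, K)\<in>p. Sup K - Inf K) < \<delta> \<Longrightarrow> (\<Sum>(x, K)\<in>p. \<bar>f (Sup K) - f (Inf K)\<bar>) < e"
    using abs_continuous_on_tagged_partial_division[OF ac \<open>0 < e\<close>] by blast
  obtain G where "open G" "E \<subseteq> G" and G: "G \<in> lmeasurable" "measure lebesgue G < \<delta>"
    using null_set_open_cover[OF E(1) \<open>0 < \<delta>\<close>] by blast
  obtain R where R: "\<And>t. 0 < R t" "\<And>t. t \<in> E \<Longrightarrow> ball t (R t) \<subseteq> G"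
    "\<And>t u v. t \<notin> E \<Longrightarrow> a < t \<Longrightarrow> t < b \<Longrightarrow> t - R t < u \<Longrightarrow> u \<le> t \<Longrightarrow> t \<le> v \<Longrightarrow> v < t + R t
      \<Longrightarrow> - e * (v - u) \<le> f v - f u"
    by (rule gauge_straddle_off_null_set[OF \<open>open G\<close> \<open>E \<subseteq> G\<close> \<open>0 < e\<close> deriv]) (rule that)
  have "gauge (\<lambda>t. ball t (R t))" using R(1) by (simp add: gauge_def)
  then obtain p where p: "p tagged_division_of {a..b}" and fine: "(\<lambda>t. ball t (R t)) fine p"
    by (rule fine_division_exists_real)
  have "p tagged_partial_division_of {a..b}"
    using p unfolding tagged_division_of_def by blast
  note interval = tagged_partial_division_interval_real[OF this]
    and Inf_le_Sup = tagged_partial_division_Inf_le_Sup[OF this]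
  have "finite p" using p by blast
  have Kball: "K \<subseteq> ball x (R x)" if "(x, K) \<in> p" for x K
    using fine that by (rule fineD)
  define p1 where "p1 = {xK \<in> p. fst xK \<in> E}"
  define p2 where "p2 = {xK \<in> p. fst xK \<notin> E}"
  have p1: "p1 tagged_partial_division_of {a..b}"
    by (rule tagged_partial_division_subset[OF \<open>p tagged_partial_division_of {a..b}\<close>]) (auto simp: p1_def)
  have "f b - f a = (\<Sum>(x, K)\<in>p. f (Sup K) - f (Inf K))"
    using additive_tagged_division_1[OF \<open>a \<le> b\<close> p, of f] by simp
  also have "\<dots> = (\<Sum>(x, K)\<in>p1. f (Sup K) - f (Inf K)) + (\<Sum>(x, K)\<in>p2. f (Sup K) - f (Inf K))"
  proof -
    have "p = p1 \<union> p2" "p1 \<inter> p2 = {}" by (auto simp: p1_def p2_def)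
    with \<open>finite p\<close> show ?thesis by (simp add: sum.union_disjoint)
  qed
  finally have split: "f b - f a = (\<Sum>(x, K)\<in>p1. f (Sup K) - f (Inf K)) + (\<Sum>(x, K)\<in>p2. f (Sup K) - f (Inf K))" .
  have "K \<subseteq> G" if "(x, K) \<in> p1" for x K
    using that Kball R(2) by (fastforce simp: p1_def)
  then have "(\<Sum>(x, K)\<in>p1. Sup K - Inf K) \<le> measure lebesgue G"
    by (rule tagged_partial_division_length_le_measure[OF p1 G(1)])
  then have "(\<Sum>(x, K)\<in>p1. \<bar>f (Sup K) - f (Inf K)\<bar>) < e"
    using G(2) by (intro \<delta>[OF p1]) linarith
  moreover have "(\<Sum>(x, K)\<in>p1. - \<bar>f (Sup K) - f (Inf K)\<bar>) \<le> (\<Sum>(x, K)\<in>p1. f (Sup K) - f (Inf K))"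
    by (rule sum_mono) auto
  ultimately have p1_ge: "- e < (\<Sum>(x, K)\<in>p1. f (Sup K) - f (Inf K))"
    by (simp add: sum_negf case_prod_beta)
  have "(\<Sum>(x, K)\<in>p2. - e * (Sup K - Inf K)) \<le> (\<Sum>(x, K)\<in>p2. f (Sup K) - f (Inf K))"
  proof (rule sum_mono, clarify)
    fix x K assume "(x, K) \<in> p2"
    then have xK: "(x, K) \<in> p" "x \<notin> E" by (auto simp: p2_def)
    obtain u v where K: "K = {u..v}" "a \<le> u" "u \<le> x" "x \<le> v" "v \<le> b"
      by (rule interval[OF xK(1)])
    moreover have "x \<noteq> a" "x \<noteq> b" using xK(2) E by auto
    ultimately have "a < x" "x < b" by auto
    have "u \<in> K" "v \<in> K" using K by auto
    then have "u \<in> ball x (R x)" "v \<in> ball x (R x)"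
      using Kball[OF xK(1)] by auto
    then have "x - R x < u" "v < x + R x" by (auto simp: dist_real_def)
    then show "- e * (Sup K - Inf K) \<le> f (Sup K) - f (Inf K)"
      using R(3)[OF xK(2) \<open>a < x\<close> \<open>x < b\<close>] K by simp
  qed
  moreover have "- e * (b - a) \<le> (\<Sum>(x, K)\<in>p2. - e * (Sup K - Inf K))"
  proof -
    have "(\<Sum>(x, K)\<in>p2. Sup K - Inf K) \<le> (\<Sum>(x, K)\<in>p. Sup K - Inf K)"
      using \<open>finite p\<close> Inf_le_Sup by (intro sum_mono2) (auto simp: p2_def)
    also have "\<dots> = b - a"
      using additive_tagged_division_1[OF \<open>a \<le> b\<close> p, of "\<lambda>t. t"] by simp
    finally have "- e * (b - a) \<le> - e * (\<Sum>(x, K)\<in>p2. Sup K - Inf K)"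
      using \<open>0 < e\<close> by simp
    also have "\<dots> = (\<Sum>(x, K)\<in>p2. - e * (Sup K - Inf K))"
      by (simp add: sum_distrib_left case_prod_beta)
    finally show ?thesis .
  qed
  ultimately have p2_ge: "- e * (b - a) \<le> (\<Sum>(x, K)\<in>p2. f (Sup K) - f (Inf K))"
    by linarith
  show ?thesis using split p1_ge p2_ge by (simp add: algebra_simps)
qed

theorem abs_continuous_on_nondecreasing:
  assumes "a \<le> b" and ac: "abs_continuous_on a b f"
    and deriv: "AE t in lborel. a < t \<and> t < b \<longrightarrow> (\<exists>d\<ge>0. (f has_real_derivative d) (at t))"
  shows "f a \<le> f b"
proof (rule ccontr)
  assume "\<not> f a \<le> f b"
  obtain N where N: "\<And>t. t \<in> space lborel - N \<Longrightarrow> a < t \<and> t < b \<longrightarrow> (\<exists>d\<ge>0. (f has_real_derivative d) (at t))"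
    and "N \<in> null_sets lborel"
    by (rule AE_E3[OF deriv]) (rule that)
  then have E: "N \<union> {a, b} \<in> null_sets lborel"
    using finite_imp_null_set_lborel[of "{a, b}"] by blast
  define L where "L = 1 + (b - a)"
  have "0 < L" using \<open>a \<le> b\<close> by (simp add: L_def)
  with \<open>\<not> f a \<le> f b\<close> have e: "0 < (f a - f b) / (2 * L)" by simp
  have "\<forall>t\<in>{a<..<b} - (N \<union> {a, b}). \<exists>d\<ge>0. (f has_real_derivative d) (at t)"
    using N by auto
  from abs_continuous_on_increment_ge[OF \<open>a \<le> b\<close> ac E _ _ this e]
  have "- ((f a - f b) / (2 * L)) * L \<le> f b - f a"
    by (simp add: L_def[symmetric])
  with \<open>0 < L\<close> have "- ((f a - f b) / 2) \<le> f b - f a" by simp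
  with \<open>\<not> f a \<le> f b\<close> show False by (simp add: field_simps)
qed

corollary abs_continuous_on_deriv_lower_bound:
  assumes "a \<le> b" "abs_continuous_on a b f"
    and "AE t in lborel. a < t \<and> t < b \<longrightarrow> (\<exists>d\<ge>C. (f has_real_derivative d) (at t))"
  shows "C * (b - a) \<le> f b - f a"
proof -
  have "(\<lambda>t. f t + - C * t) a \<le> (\<lambda>t. f t + - C * t) b"
  proof (rule abs_continuous_on_nondecreasing[where f = "\<lambda>t. f t + - C * t"])
    show "abs_continuous_on a b (\<lambda>t. f t + - C * t)"
      using assms(2) abs_continuous_on_linear[of a b "- C"] by (rule abs_continuous_on_add)
    show "AE t in lborel. a < t \<and> t < b \<longrightarrow> (\<exists>d\<ge>0. ((\<lambda>t. f t + - C * t) has_real_derivative d) (at t))"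
      using assms(3)
    proof eventually_elim
      case (elim t)
      show ?case
      proof
        assume "a < t \<and> t < b"
        then obtain d where "C \<le> d" "(f has_real_derivative d) (at t)" using elim by blast
        then have "((\<lambda>t. f t + - C * t) has_real_derivative d - C) (at t)"
          by (auto intro!: derivative_eq_intros)
        with \<open>C \<le> d\<close> show "\<exists>d\<ge>0. ((\<lambda>t. f t + - C * t) has_real_derivative d) (at t)"
          by (intro exI[of _ "d - C"]) simp
      qed
    qed
  qed fact
  then show ?thesis by (simp add: algebra_simps)
qed

section \<open>Square-integrable functions on the unit interval\<close>

lemma set_borel_measurable_Ioo_iff:
  fixes f :: "real \<Rightarrow> real"
  shows "set_borel_measurable lborel {0<..<1} f \<longleftrightarrow> f \<in> borel_measurable (restrict_space lborel {0<..<1})"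
  by (simp add: set_borel_measurable_def borel_measurable_restrict_space_iff)

lemma sq_int_iff:
  "sq_int f \<longleftrightarrow> f \<in> borel_measurable (restrict_space lborel {0<..<1})
     \<and> set_integrable lborel {0<..<1} (\<lambda>x. (f x)\<^sup>2)"
  by (simp add: sq_int_def set_borel_measurable_Ioo_iff)

lemma sq_int_measurable:
  "sq_int f \<Longrightarrow> f \<in> borel_measurable (restrict_space lborel {0<..<1})"
  by (simp add: sq_int_iff)

lemma sq_int_set_integrable:
  assumes "sq_int f"
  shows "set_integrable lborel {0<..<1} f"
proof (rule set_integrable_bound)
  show "set_integrable lborel {0<..<1} (\<lambda>x. 1 + (f x)\<^sup>2)"
    using assms by (intro set_integral_add) (auto simp: sq_int_def set_integrable_def integrable_real_indicator)
  show "set_borel_measurable lborel {0<..<1} f"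
    using assms by (simp add: sq_int_def)
  have "\<bar>y\<bar> \<le> \<bar>1 + y\<^sup>2\<bar>" for y :: real
  proof -
    have "0 \<le> (\<bar>y\<bar> - 1)\<^sup>2" by simp
    then show ?thesis by (simp add: power2_diff)
  qed
  then show "AE x in lborel. x \<in> {0<..<1} \<longrightarrow> norm (f x) \<le> norm (1 + (f x)\<^sup>2)"
    by simp
qed

lemma sq_int_const: "sq_int (\<lambda>x. c)"
  by (simp add: sq_int_def set_borel_measurable_def set_integrable_def integrable_real_indicator)

lemma sq_int_lincomb:
  assumes f: "sq_int f" and g: "sq_int g"
  shows "sq_int (\<lambda>x. a * f x + c * g x)"
  unfolding sq_int_iff
proof
  have [measurable]: "f \<in> borel_measurable (restrict_space lborel {0<..<1})"
    "g \<in> borel_measurable (restrict_space lborel {0<..<1})"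
    using f g by (simp_all add: sq_int_measurable)
  show m: "(\<lambda>x. a * f x + c * g x) \<in> borel_measurable (restrict_space lborel {0<..<1})"
    by measurable
  show "set_integrable lborel {0<..<1} (\<lambda>x. (a * f x + c * g x)\<^sup>2)"
  proof (rule set_integrable_bound)
    show "set_integrable lborel {0<..<1} (\<lambda>x. 2 * a\<^sup>2 * (f x)\<^sup>2 + 2 * c\<^sup>2 * (g x)\<^sup>2)"
      using f g by (intro set_integral_add set_integrable_mult_right) (auto simp: sq_int_def)
    show "set_borel_measurable lborel {0<..<1} (\<lambda>x. (a * f x + c * g x)\<^sup>2)"
      unfolding set_borel_measurable_Ioo_iff by measurable
    have "(a * y + c * z)\<^sup>2 \<le> 2 * a\<^sup>2 * y\<^sup>2 + 2 * c\<^sup>2 * z\<^sup>2" for y z :: real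
      using zero_le_power2[of "a * y - c * z"] by (simp add: power2_eq_square algebra_simps)
    then show "AE x in lborel. x \<in> {0<..<1} \<longrightarrow>
        norm ((a * f x + c * g x)\<^sup>2) \<le> norm (2 * a\<^sup>2 * (f x)\<^sup>2 + 2 * c\<^sup>2 * (g x)\<^sup>2)"
      by (simp add: abs_le_iff)
  qed
qed

lemma sq_int_add: "sq_int f \<Longrightarrow> sq_int g \<Longrightarrow> sq_int (\<lambda>x. f x + g x)"
  using sq_int_lincomb[of f g 1 1] by simp

lemma sq_int_set_integrable_mult_bounded:
  assumes f: "sq_int f" and g: "g \<in> borel_measurable lborel" "\<forall>x\<in>{0<..<1}. \<bar>g x\<bar> \<le> B"
  shows "set_integrable lborel {0<..<1} (\<lambda>x. f x * g x)"
proof (rule set_integrable_bound)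
  show "set_integrable lborel {0<..<1} (\<lambda>x. B * f x)"
    using sq_int_set_integrable[OF f] by simp
  have [measurable]: "f \<in> borel_measurable (restrict_space lborel {0<..<1})"
    using f by (rule sq_int_measurable)
  have [measurable]: "g \<in> borel_measurable (restrict_space lborel {0<..<1})"
    using g(1) by (rule measurable_restrict_space1)
  show "set_borel_measurable lborel {0<..<1} (\<lambda>x. f x * g x)"
    unfolding set_borel_measurable_Ioo_iff by measurable
  show "AE x in lborel. x \<in> {0<..<1} \<longrightarrow> norm (f x * g x) \<le> norm (B * f x)"
  proof (rule AE_I2, intro impI)
    fix x :: real assume "x \<in> {0<..<1}"
    then have "\<bar>g x\<bar> \<le> \<bar>B\<bar>" using g(2) by force
    then show "norm (f x * g x) \<le> norm (B * f x)"
      by (simp add: abs_mult mult.commute[of "\<bar>B\<bar>"] mult_left_mono)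
  qed
qed

lemma set_integral_Ioo_eq_restrict_space:
  fixes f :: "real \<Rightarrow> real"
  shows "(LBINT x:{0<..<1}. f x) = integral\<^sup>L (restrict_space lborel {0<..<1}) f"
  by (simp add: set_lebesgue_integral_def integral_restrict_space)

lemma set_integral_Ioo_const [simp]: "(LBINT x:{0<..<1::real}. (c::real)) = c"
  by (subst set_integral_const) auto

lemma L2nrm_cong_AE:
  assumes "set_borel_measurable lborel {0<..<1} f" "set_borel_measurable lborel {0<..<1} g"
    and "AE x in lborel. 0 < x \<and> x < 1 \<longrightarrow> f x = g x"
  shows "L2nrm f = L2nrm g"
proof -
  have [measurable]: "f \<in> borel_measurable (restrict_space lborel {0<..<1})"
    "g \<in> borel_measurable (restrict_space lborel {0<..<1})"
    using assms(1,2) by (simp_all add: set_borel_measurable_Ioo_iff)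
  have "integral\<^sup>L (restrict_space lborel {0<..<1}) (\<lambda>x. (f x)\<^sup>2)
      = integral\<^sup>L (restrict_space lborel {0<..<1}) (\<lambda>x. (g x)\<^sup>2)"
    using assms(3) by (intro integral_cong_AE) (auto simp: AE_restrict_space_iff)
  then show ?thesis
    by (simp add: L2nrm_def set_integral_Ioo_eq_restrict_space)
qed

lemma set_integral_abs_le_L2nrm:
  assumes "sq_int f"
  shows "(LBINT x:{0<..<1}. \<bar>f x\<bar>) \<le> L2nrm f"
proof -
  define m where "m = (LBINT x:{0<..<1}. \<bar>f x\<bar>)"
  have int_abs: "set_integrable lborel {0<..<1} (\<lambda>x. \<bar>f x\<bar>)"
    using sq_int_set_integrable[OF assms] by (rule set_integrable_abs)
  have int_sq: "set_integrable lborel {0<..<1} (\<lambda>x. (f x)\<^sup>2)"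
    using assms by (simp add: sq_int_def)
  have int_const: "set_integrable lborel {0<..<1::real} (\<lambda>x. c)" for c :: real
    by (simp add: set_integrable_def integrable_real_indicator)
  have "0 \<le> m" unfolding m_def set_integral_Ioo_eq_restrict_space by simp
  \<comment> \<open>the variance of \<open>\<bar>f\<bar>\<close> on the unit interval is nonnegative\<close>
  have "0 \<le> (LBINT x:{0<..<1}. (\<bar>f x\<bar> - m)\<^sup>2)"
    unfolding set_integral_Ioo_eq_restrict_space by simp
  also have "\<dots> = (LBINT x:{0<..<1}. (f x)\<^sup>2 - 2 * m * \<bar>f x\<bar> + m\<^sup>2)"
    by (simp add: power2_diff algebra_simps)
  also have "\<dots> = (LBINT x:{0<..<1}. (f x)\<^sup>2 - 2 * m * \<bar>f x\<bar>) + m\<^sup>2"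
    using int_sq int_abs int_const by (subst set_integral_add(2)) auto
  also have "\<dots> = (LBINT x:{0<..<1}. (f x)\<^sup>2) - 2 * m * m + m\<^sup>2"
    using int_sq int_abs by (subst set_integral_diff(2)) (auto simp: m_def)
  also have "\<dots> = (LBINT x:{0<..<1}. (f x)\<^sup>2) - m\<^sup>2"
    by (simp add: power2_eq_square)
  finally have "m\<^sup>2 \<le> (LBINT x:{0<..<1}. (f x)\<^sup>2)" by simp
  then show ?thesis
    using \<open>0 \<le> m\<close> by (simp add: L2nrm_def m_def[symmetric] real_le_rsqrt)
qed

lemma abs_set_integral_mult_le_L2nrm:
  assumes f: "sq_int f" and g: "g \<in> borel_measurable lborel" "\<forall>x\<in>{0<..<1}. \<bar>g x\<bar> \<le> B"
  shows "\<bar>LBINT x:{0<..<1}. f x * g x\<bar> \<le> B * L2nrm f"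
proof -
  have "0 \<le> B" using bspec[OF g(2), of "1/2"] by simp
  have "\<bar>LBINT x:{0<..<1}. f x * g x\<bar> \<le> (LBINT x:{0<..<1}. \<bar>f x * g x\<bar>)"
    using set_integral_norm_bound[OF sq_int_set_integrable_mult_bounded[OF assms]] by simp
  also have "\<dots> \<le> (LBINT x:{0<..<1}. B * \<bar>f x\<bar>)"
  proof (rule set_integral_mono)
    show "set_integrable lborel {0<..<1} (\<lambda>x. \<bar>f x * g x\<bar>)"
      using sq_int_set_integrable_mult_bounded[OF assms] by (rule set_integrable_abs)
    show "set_integrable lborel {0<..<1} (\<lambda>x. B * \<bar>f x\<bar>)"
      using sq_int_set_integrable[OF f] by (simp add: set_integrable_abs)
    show "\<bar>f x * g x\<bar> \<le> B * \<bar>f x\<bar>" if "x \<in> {0<..<1}" for x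
      using g(2) that by (simp add: abs_mult mult.commute[of B] mult_left_mono)
  qed
  also have "\<dots> = B * (LBINT x:{0<..<1}. \<bar>f x\<bar>)" by simp
  also have "\<dots> \<le> B * L2nrm f"
    using set_integral_abs_le_L2nrm[OF f] \<open>0 \<le> B\<close> by (rule mult_left_mono)
  finally show ?thesis .
qed

lemma set_integral_Ioo_cong_AE:
  fixes f g :: "real \<Rightarrow> real"
  assumes "set_borel_measurable lborel {0<..<1} f" "set_borel_measurable lborel {0<..<1} g"
    and "AE x in lborel. 0 < x \<and> x < 1 \<longrightarrow> f x = g x"
  shows "(LBINT x:{0<..<1}. f x) = (LBINT x:{0<..<1}. g x)"
  using assms unfolding set_integral_Ioo_eq_restrict_space set_borel_measurable_Ioo_iff
  by (intro integral_cong_AE) (auto simp: AE_restrict_space_iff)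

lemma set_integrable_imp_set_borel_measurable:
  fixes f :: "real \<Rightarrow> real"
  shows "set_integrable lborel A f \<Longrightarrow> set_borel_measurable lborel A f"
  by (simp add: set_integrable_def set_borel_measurable_def)

lemma set_integral_mult_bounded_lincomb:
  assumes f: "sq_int f" and g: "sq_int g"
    and \<psi>: "\<psi> \<in> borel_measurable lborel" "\<forall>x\<in>{0<..<1}. \<bar>\<psi> x\<bar> \<le> B"
  shows "(LBINT x:{0<..<1}. (a * f x + c * g x) * \<psi> x)
    = a * (LBINT x:{0<..<1}. f x * \<psi> x) + c * (LBINT x:{0<..<1}. g x * \<psi> x)"
proof -
  have "set_integrable lborel {0<..<1} (\<lambda>x. f x * \<psi> x)" "set_integrable lborel {0<..<1} (\<lambda>x. g x * \<psi> x)"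
    using sq_int_set_integrable_mult_bounded[OF f \<psi>] sq_int_set_integrable_mult_bounded[OF g \<psi>] .
  then show ?thesis
    by (simp add: distrib_right mult.assoc set_integral_add set_integral_mult_right)
qed

section \<open>Primitives and the torsion function\<close>

lemma prim_eq_set_integral: "0 \<le> y \<Longrightarrow> prim h y = (LBINT s:{0<..<y}. h s)"
  by (simp add: prim_def interval_lebesgue_integral_def einterval_def greaterThanLessThan_def
      greaterThan_def lessThan_def Int_def)

lemma integrable_lborel_pair_mult:
  fixes f g :: "real \<Rightarrow> real"
  assumes f: "integrable lborel f" and g: "integrable lborel g"
  shows "integrable (lborel \<Otimes>\<^sub>M lborel) (\<lambda>(x, y). f x * g y)"
proof -
  have [measurable]: "f \<in> borel_measurable lborel" "g \<in> borel_measurable lborel"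
    using f g by auto
  have "(\<integral>\<^sup>+z. ennreal (norm ((\<lambda>(x, y). f x * g y) z)) \<partial>(lborel \<Otimes>\<^sub>M lborel))
      = (\<integral>\<^sup>+x. \<integral>\<^sup>+y. ennreal (norm (f x)) * ennreal (norm (g y)) \<partial>lborel \<partial>lborel)"
    by (subst lborel.nn_integral_fst[symmetric]) (auto simp: abs_mult ennreal_mult)
  also have "\<dots> = (\<integral>\<^sup>+x. ennreal (norm (f x)) \<partial>lborel) * (\<integral>\<^sup>+y. ennreal (norm (g y)) \<partial>lborel)"
    by (simp add: nn_integral_cmult nn_integral_multc)
  also have "\<dots> < \<infinity>"
    using f g by (simp add: integrable_iff_bounded ennreal_mult_less_top)
  finally show ?thesis by (simp add: integrable_iff_bounded)
qed

lemma set_integral_prim_mult: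
  fixes h k K :: "real \<Rightarrow> real"
  assumes h: "set_integrable lborel {0<..<1} h"
    and k: "continuous_on UNIV k" and K: "\<And>y. (K has_real_derivative k y) (at y)"
  shows "set_integrable lborel {0<..<1} (\<lambda>y. prim h y * k y)"
    and "(LBINT y:{0<..<1}. prim h y * k y) = (LBINT s:{0<..<1}. h s * (K 1 - K s))"
proof -
  define h' where "h' = (\<lambda>s. indicator {0<..<1} s * h s)"
  have h': "integrable lborel h'"
    using h by (simp add: h'_def set_integrable_def)
  then have [measurable]: "h' \<in> borel_measurable lborel" by auto
  have [measurable]: "k \<in> borel_measurable lborel"
    using k by (simp add: borel_measurable_continuous_onI)
  obtain B where B: "\<And>y. y \<in> {0..1} \<Longrightarrow> \<bar>k y\<bar> \<le> B"
    using compact_imp_bounded[OF compact_continuous_image[OF continuous_on_subset[OF k] compact_Icc]]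
    by (force simp: bounded_iff)
  \<comment> \<open>\<open>F y s\<close> is the integrand of \<open>\<integral>\<^sub>0\<^sup>1 (\<integral>\<^sub>0\<^sup>y h s ds) k y dy\<close> on the triangle \<open>0 < s < y < 1\<close>\<close>
  define F where "F y s = (if 0 < y \<and> y < 1 \<and> 0 < s \<and> s < y then h' s * k y else 0)" for y s
  have F_integrable: "integrable (lborel \<Otimes>\<^sub>M lborel) (\<lambda>(y, s). F y s)"
  proof (rule Bochner_Integration.integrable_bound)
    show "integrable (lborel \<Otimes>\<^sub>M lborel) (\<lambda>(y::real, s). (indicator {0<..<1} y * B) * \<bar>h' s\<bar>)"
      using integrable_lborel_pair_mult[of "\<lambda>y. indicator {0<..<1} y * B" "\<lambda>s. \<bar>h' s\<bar>"] h'
      by (simp add: integrable_real_indicator)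
    show "(\<lambda>(y, s). F y s) \<in> borel_measurable (lborel \<Otimes>\<^sub>M lborel)"
      unfolding F_def by measurable
    have "\<bar>F y s\<bar> \<le> indicator {0<..<1} y * B * \<bar>h' s\<bar>" for y s
      using B[of y] by (auto simp: F_def indicator_def abs_mult mult.commute[of _ "\<bar>h' s\<bar>"] mult_left_mono)
    then show "AE z in lborel \<Otimes>\<^sub>M lborel. norm ((\<lambda>(y, s). F y s) z)
        \<le> norm ((\<lambda>(y, s). (indicator {0<..<1} y * B) * \<bar>h' s\<bar>) z)"
      by (auto simp: abs_mult indicator_def intro!: AE_I2 order.trans[OF _ abs_ge_self])
  qed
  have inner_s: "(\<integral>s. F y s \<partial>lborel) = indicator {0<..<1} y * (prim h y * k y)" for y
  proof (cases "0 < y \<and> y < 1")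
    case True
    have "(\<lambda>s. F y s) = (\<lambda>s. indicator {0<..<y} s * h s * k y)"
      using True by (auto simp: F_def h'_def indicator_def fun_eq_iff)
    then have "(\<integral>s. F y s \<partial>lborel) = (LBINT s:{0<..<y}. h s) * k y"
      by (simp add: set_lebesgue_integral_def)
    then show ?thesis using True by (simp add: prim_eq_set_integral)
  next
    case False
    then have "(\<lambda>s. F y s) = (\<lambda>s. 0)" by (auto simp: F_def fun_eq_iff)
    then show ?thesis using False by simp
  qed
  have inner_y: "(\<integral>y. F y s \<partial>lborel) = indicator {0<..<1} s * (h s * (K 1 - K s))" for s
  proof (cases "0 < s \<and> s < 1")
    case True
    have "(\<lambda>y. F y s) = (\<lambda>y. h s * (indicator {s<..<1} y * k y))"
      using True by (auto simp: F_def h'_def indicator_def fun_eq_iff)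
    then have "(\<integral>y. F y s \<partial>lborel) = h s * (LBINT y:{s<..<1}. k y)"
      by (simp add: set_lebesgue_integral_def)
    also have "(LBINT y:{s<..<1}. k y) = K 1 - K s"
    proof -
      have "continuous_on {min s 1..max s 1} k"
        using k by (rule continuous_on_subset) simp
      moreover have "(K has_vector_derivative k x) (at x within {min s 1..max s 1})" for x
        using K by (simp add: has_real_derivative_iff_has_vector_derivative[symmetric] has_field_derivative_at_within)
      ultimately have "(LBINT y=s..1. k y) = K 1 - K s"
        using interval_integral_FTC_finite[of s 1 k K] by (simp add: one_ereal_def)
      then show ?thesis
        using True by (simp add: interval_lebesgue_integral_def einterval_def greaterThanLessThan_def
            greaterThan_def lessThan_def Int_def)
    qed
    finally show ?thesis using True by simp
  next
    case False
    then have "(\<lambda>y. F y s) = (\<lambda>y. 0)" by (auto simp: F_def fun_eq_iff)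
    then show ?thesis using False by simp
  qed
  show "set_integrable lborel {0<..<1} (\<lambda>y. prim h y * k y)"
    using lborel_pair.integrable_fst[OF F_integrable] by (simp add: inner_s set_integrable_def)
  show "(LBINT y:{0<..<1}. prim h y * k y) = (LBINT s:{0<..<1}. h s * (K 1 - K s))"
    using lborel_pair.Fubini_integral[OF F_integrable] by (simp add: inner_s inner_y set_lebesgue_integral_def)
qed

lemma set_integral_Ioo_FTC:
  fixes f F :: "real \<Rightarrow> real"
  assumes "a \<le> b" "continuous_on {a..b} f" "\<And>x. (F has_real_derivative f x) (at x)"
  shows "(LBINT x:{a<..<b}. f x) = F b - F a"
proof -
  have "(LBINT x=a..b. f x) = F b - F a"
    using assms by (intro interval_integral_FTC_finite)
      (auto simp: has_real_derivative_iff_has_vector_derivative[symmetric] has_field_derivative_at_within)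
  then show ?thesis
    using \<open>a \<le> b\<close> by (simp add: interval_lebesgue_integral_le_eq)
qed

text \<open>The torsion function solves \<open>-\<phi>'' = 2\<close>, \<open>\<phi>(0) = \<phi>(1) = 0\<close>; integrating by parts twice,
  its moment turns \<open>A f = -f''\<close> into \<open>2 \<integral> f\<close>.\<close>

definition torsion :: "real \<Rightarrow> real" where
  "torsion x = x * (1 - x)"

lemma borel_measurable_torsion [measurable]: "torsion \<in> borel_measurable lborel"
  unfolding torsion_def by measurable

lemma torsion_bounds:
  assumes "0 < x" "x < 1"
  shows "0 \<le> torsion x" "\<bar>torsion x\<bar> \<le> 1"
proof -
  show "0 \<le> torsion x" using assms by (simp add: torsion_def)
  have "x * (1 - x) \<le> x" by (rule mult_left_le) (use assms in auto)
  then have "torsion x \<le> 1" using assms unfolding torsion_def by linarith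
  with \<open>0 \<le> torsion x\<close> show "\<bar>torsion x\<bar> \<le> 1" by simp
qed

definition torsion_moment :: "(real \<Rightarrow> real) \<Rightarrow> real" where
  "torsion_moment f = (LBINT x:{0<..<1}. f x * torsion x)"

lemma set_integral_torsion: "(LBINT x:{0<..<1}. torsion x) = 1 / 6"
proof -
  have "((\<lambda>x. x\<^sup>2 / 2 - x ^ 3 / 3) has_real_derivative torsion x) (at x)" for x
    by (auto intro!: derivative_eq_intros simp: torsion_def power2_eq_square algebra_simps)
  then show ?thesis
    by (subst set_integral_Ioo_FTC) (auto simp: torsion_def continuous_intros)
qed

lemma second_primitive_integrals:
  assumes h: "set_integrable lborel {0<..<1} h"
  shows "prim (\<lambda>y. c + prim h y) 1 = c + (LBINT s:{0<..<1}. h s * (1 - s))"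
    and "set_integrable lborel {0<..<1} (prim (\<lambda>y. c + prim h y))"
    and "(LBINT x:{0<..<1}. prim (\<lambda>y. c + prim h y) x)
      = c / 2 + (LBINT s:{0<..<1}. h s * (1 / 2 - s + s\<^sup>2 / 2))"
proof -
  define P where "P = prim h"
  have PI: "set_integrable lborel {0<..<1} P"
    and P_int: "(LBINT y:{0<..<1}. P y) = (LBINT s:{0<..<1}. h s * (1 - s))"
    using set_integral_prim_mult[OF h, of "\<lambda>_. 1" "\<lambda>y. y"] by (auto simp: P_def intro!: derivative_eq_intros)
  have P_mult: "(LBINT y:{0<..<1}. P y * (1 - y)) = (LBINT s:{0<..<1}. h s * (1 / 2 - s + s\<^sup>2 / 2))"
  proof -
    have "((\<lambda>y. y - y\<^sup>2 / 2) has_real_derivative 1 - y) (at y)" for y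
      by (auto intro!: derivative_eq_intros)
    then have "(LBINT y:{0<..<1}. P y * (1 - y)) = (LBINT s:{0<..<1}. h s * ((1 - 1\<^sup>2 / 2) - (s - s\<^sup>2 / 2)))"
      unfolding P_def by (intro set_integral_prim_mult(2)[OF h]) (auto intro: continuous_intros)
    then show ?thesis by (simp add: algebra_simps)
  qed
  have primP_I: "set_integrable lborel {0<..<1} (prim P)"
    and primP_int: "(LBINT y:{0<..<1}. prim P y) = (LBINT s:{0<..<1}. P s * (1 - s))"
    using set_integral_prim_mult[OF PI, of "\<lambda>_. 1" "\<lambda>y. y"] by (auto intro!: derivative_eq_intros)
  have F: "prim (\<lambda>y. c + prim h y) x = c * x + prim P x" if "0 \<le> x" "x \<le> 1" for x
  proof -
    have "set_integrable lborel {0<..<x} P"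
      using that by (intro set_integrable_subset[OF PI]) auto
    moreover have "set_integrable lborel {0<..<x} (\<lambda>_. c)"
      using that by (simp add: set_integrable_def integrable_real_indicator emeasure_lborel_Ioo)
    ultimately show ?thesis
      using that by (simp add: P_def prim_eq_set_integral set_integral_add set_integral_const)
  qed
  show "prim (\<lambda>y. c + prim h y) 1 = c + (LBINT s:{0<..<1}. h s * (1 - s))"
    using F[of 1] P_int by (simp add: prim_eq_set_integral)
  have "set_integrable lborel {0..1} (\<lambda>x. c * x)"
    by (rule borel_integrable_atLeastAtMost') (intro continuous_intros)
  then have "set_integrable lborel {0<..<1} (\<lambda>x. c * x)"
    by (rule set_integrable_subset) auto
  then have cP: "set_integrable lborel {0<..<1} (\<lambda>x. c * x + prim P x)"
    using primP_I by (rule set_integral_add)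
  then show "set_integrable lborel {0<..<1} (prim (\<lambda>y. c + prim h y))"
    by (rule set_integrable_cong[THEN iffD1, rotated -1]) (auto simp: F)
  have "((\<lambda>x. x\<^sup>2 / 2) has_real_derivative x) (at x)" for x
    by (auto intro!: derivative_eq_intros)
  then have "(LBINT x:{0<..<1}. x) = (1 / 2 :: real)"
    by (subst set_integral_Ioo_FTC) (auto intro: continuous_intros)
  moreover have "(LBINT x:{0<..<1}. prim (\<lambda>y. c + prim h y) x) = (LBINT x:{0<..<1}. c * x + prim P x)"
    by (rule set_lebesgue_integral_cong) (auto simp: F)
  ultimately show "(LBINT x:{0<..<1}. prim (\<lambda>y. c + prim h y) x)
      = c / 2 + (LBINT s:{0<..<1}. h s * (1 / 2 - s + s\<^sup>2 / 2))"
    using cP primP_I \<open>set_integrable lborel {0<..<1} (\<lambda>x. c * x)\<close>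
    by (simp add: set_integral_add primP_int P_mult)
qed

lemma DA_lap_torsion:
  assumes DA: "DA_lap f h" and f: "sq_int f"
  shows "torsion_moment h = -2 * (LBINT x:{0<..<1}. f x)"
proof -
  obtain c where h: "sq_int h" and c: "prim (\<lambda>y. c + prim h y) 1 = 0"
    and f_ae: "AE x in lborel. 0 < x \<and> x < 1 \<longrightarrow> f x = prim (\<lambda>y. c + prim h y) x"
    using DA by (auto simp: DA_lap_def)
  note prim2 = second_primitive_integrals[OF sq_int_set_integrable[OF h], of c]
  have c_eq: "c = - (LBINT s:{0<..<1}. h s * (1 - s))"
    using c prim2(1) by simp
  have "(LBINT x:{0<..<1}. f x) = (LBINT x:{0<..<1}. prim (\<lambda>y. c + prim h y) x)"
    using f_ae f set_integrable_imp_set_borel_measurable[OF prim2(2)]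
    by (intro set_integral_Ioo_cong_AE) (auto simp: sq_int_def)
  then have f_int: "(LBINT x:{0<..<1}. f x) = c / 2 + (LBINT s:{0<..<1}. h s * (1 / 2 - s + s\<^sup>2 / 2))"
    using prim2(3) by simp
  have h_mult: "set_integrable lborel {0<..<1} (\<lambda>s. h s * w s)"
    if "w \<in> borel_measurable lborel" "\<forall>s\<in>{0<..<1}. \<bar>w s\<bar> \<le> 1" for w
    using sq_int_set_integrable_mult_bounded[OF h that] .
  have "(LBINT x:{0<..<1}. h x * torsion x)
      = (LBINT s:{0<..<1}. h s * (1 - s) - 2 * (h s * (1 / 2 - s + s\<^sup>2 / 2)))"
    by (simp add: torsion_def power2_eq_square algebra_simps)
  also have "\<dots> = (LBINT s:{0<..<1}. h s * (1 - s)) - 2 * (LBINT s:{0<..<1}. h s * (1 / 2 - s + s\<^sup>2 / 2))"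
  proof (subst set_integral_diff(2))
    have "\<bar>1 / 2 - s + s\<^sup>2 / 2\<bar> \<le> 1" if "0 < s" "s < 1" for s :: real
    proof -
      have "s * s \<le> s" by (rule mult_left_le) (use that in auto)
      moreover have "0 \<le> s * s" by simp
      ultimately show ?thesis using that unfolding power2_eq_square abs_le_iff by linarith
    qed
    then show "set_integrable lborel {0<..<1} (\<lambda>s. 2 * (h s * (1 / 2 - s + s\<^sup>2 / 2)))"
      using h_mult[of "\<lambda>s. 1 / 2 - s + s\<^sup>2 / 2"] by auto
  qed (use h_mult[of "\<lambda>s. 1 - s"] in auto)
  finally show ?thesis
    using c_eq f_int by (simp add: torsion_moment_def)
qed

section \<open>Trajectories through \<open>D\<close>\<close>

lemma has_H_deriv_pairing:
  fixes u :: "real \<Rightarrow> real \<Rightarrow> real"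
  assumes u: "\<And>s. sq_int (u s)" and v: "sq_int v" and deriv: "has_H_deriv u v t"
    and \<psi>: "\<psi> \<in> borel_measurable lborel" "\<forall>x\<in>{0<..<1}. \<bar>\<psi> x\<bar> \<le> B"
  shows "((\<lambda>s. LBINT x:{0<..<1}. u s x * \<psi> x) has_real_derivative (LBINT x:{0<..<1}. v x * \<psi> x)) (at t)"
proof -
  define P where "P f = (LBINT x:{0<..<1}. f x * \<psi> x)" for f :: "real \<Rightarrow> real"
  have lin: "P (\<lambda>x. a * f x + c * g x) = a * P f + c * P g" if "sq_int f" "sq_int g" for a c f g
    using set_integral_mult_bounded_lincomb[OF that \<psi>] by (simp add: P_def)
  define D where "D s = (\<lambda>x. inverse (s - t) * u s x + (- inverse (s - t)) * u t x)" for s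
  have D: "sq_int (D s)" for s
    unfolding D_def by (rule sq_int_lincomb[OF u u])
  define Q where "Q s = (\<lambda>x. (u s x - u t x) / (s - t) - v x)" for s
  have Q_eq: "Q s = (\<lambda>x. 1 * D s x + (- 1) * v x)" for s
    by (simp add: Q_def D_def fun_eq_iff divide_inverse algebra_simps)
  have Q: "sq_int (Q s)" for s
    unfolding Q_eq by (rule sq_int_lincomb[OF D v])
  have "P (Q s) = (P (u s) - P (u t)) / (s - t) - P v" for s
  proof -
    have "P (Q s) = 1 * P (D s) + (- 1) * P v"
      unfolding Q_eq by (rule lin[OF D v])
    moreover have "P (D s) = inverse (s - t) * P (u s) + (- inverse (s - t)) * P (u t)"
      unfolding D_def by (rule lin[OF u u])
    ultimately show ?thesis by (simp add: divide_inverse algebra_simps)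
  qed
  moreover have "\<bar>P (Q s)\<bar> \<le> B * L2nrm (Q s)" for s
    unfolding P_def using Q \<psi> by (rule abs_set_integral_mult_le_L2nrm)
  ultimately have bound: "\<bar>(P (u s) - P (u t)) / (s - t) - P v\<bar> \<le> B * L2nrm (Q s)" for s
    by metis
  have "((\<lambda>s. B * L2nrm (Q s)) \<longlongrightarrow> 0) (at t)"
    using tendsto_mult_right_zero[OF deriv[unfolded has_H_deriv_def]] by (simp add: Q_def)
  then have "((\<lambda>s. (P (u s) - P (u t)) / (s - t) - P v) \<longlongrightarrow> 0) (at t)"
    by (rule Lim_null_comparison[rotated]) (use bound in \<open>auto intro: always_eventually\<close>)
  then show ?thesis
    unfolding has_field_derivative_iff P_def by (rule LIM_zero_cancel)
qed

lemma abs_continuous_on_pairing: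
  fixes u :: "real \<Rightarrow> real \<Rightarrow> real"
  assumes ac: "H_abs_cont u a b" and u: "\<And>s. sq_int (u s)"
    and \<psi>: "\<psi> \<in> borel_measurable lborel" "\<forall>x\<in>{0<..<1}. \<bar>\<psi> x\<bar> \<le> B"
  shows "abs_continuous_on a b (\<lambda>s. LBINT x:{0<..<1}. u s x * \<psi> x)"
proof (rule abs_continuous_onI)
  fix \<epsilon> :: real assume "0 < \<epsilon>"
  have "0 \<le> B" using bspec[OF \<psi>(2), of "1/2"] by simp
  have "0 < \<epsilon> / (B + 1)" using \<open>0 < \<epsilon>\<close> \<open>0 \<le> B\<close> by simp
  then obtain \<delta> where "0 < \<delta>" and \<delta>: "\<forall>(n::nat) p q. (\<forall>i<n. a \<le> p i \<and> p i \<le> q i \<and> q i \<le> b)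
      \<and> (\<forall>i<n. \<forall>j<n. i \<noteq> j \<longrightarrow> q i \<le> p j \<or> q j \<le> p i) \<and> (\<Sum>i<n. q i - p i) < \<delta>
      \<longrightarrow> (\<Sum>i<n. L2nrm (\<lambda>x. u (q i) x - u (p i) x)) < \<epsilon> / (B + 1)"
    using ac unfolding H_abs_cont_def by blast
  have incr: "\<bar>(LBINT x:{0<..<1}. u q x * \<psi> x) - (LBINT x:{0<..<1}. u p x * \<psi> x)\<bar>
      \<le> B * L2nrm (\<lambda>x. u q x - u p x)" for p q
    using abs_set_integral_mult_le_L2nrm[OF sq_int_lincomb[OF u u, of 1 q "- 1" p] \<psi>]
      set_integral_mult_bounded_lincomb[OF u u \<psi>, of 1 q "- 1" p]
    by simp
  show "\<exists>\<delta>>0. \<forall>(n::nat) p q. (\<forall>i<n. a \<le> p i \<and> p i \<le> q i \<and> q i \<le> b)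
     \<longrightarrow> (\<forall>i<n. \<forall>j<n. i \<noteq> j \<longrightarrow> q i \<le> p j \<or> q j \<le> p i)
     \<longrightarrow> (\<Sum>i<n. q i - p i) < \<delta>
     \<longrightarrow> (\<Sum>i<n. \<bar>(LBINT x:{0<..<1}. u (q i) x * \<psi> x) - (LBINT x:{0<..<1}. u (p i) x * \<psi> x)\<bar>) < \<epsilon>"
  proof (intro exI[of _ \<delta>] conjI allI impI)
    fix n :: nat and p q :: "nat \<Rightarrow> real"
    assume pq: "\<forall>i<n. a \<le> p i \<and> p i \<le> q i \<and> q i \<le> b"
      "\<forall>i<n. \<forall>j<n. i \<noteq> j \<longrightarrow> q i \<le> p j \<or> q j \<le> p i" "(\<Sum>i<n. q i - p i) < \<delta>"
    have "(\<Sum>i<n. \<bar>(LBINT x:{0<..<1}. u (q i) x * \<psi> x) - (LBINT x:{0<..<1}. u (p i) x * \<psi> x)\<bar>)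
        \<le> B * (\<Sum>i<n. L2nrm (\<lambda>x. u (q i) x - u (p i) x))"
      unfolding sum_distrib_left by (intro sum_mono incr)
    also have "\<dots> \<le> B * (\<epsilon> / (B + 1))"
    proof (rule mult_left_mono)
      show "(\<Sum>i<n. L2nrm (\<lambda>x. u (q i) x - u (p i) x)) \<le> \<epsilon> / (B + 1)"
        using \<delta>[rule_format, of n p q] pq by simp
    qed (rule \<open>0 \<le> B\<close>)
    also have "\<dots> < \<epsilon>"
      using \<open>0 < \<epsilon>\<close> \<open>0 \<le> B\<close> by (simp add: field_simps)
    finally show "(\<Sum>i<n. \<bar>(LBINT x:{0<..<1}. u (q i) x * \<psi> x) - (LBINT x:{0<..<1}. u (p i) x * \<psi> x)\<bar>) < \<epsilon>" .
  qed (rule \<open>0 < \<delta>\<close>)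
qed

lemma complete_traj_sq_int: "complete_traj b \<omega> \<gamma> \<Longrightarrow> sq_int (\<gamma> t)"
  by (auto simp: complete_traj_def is_solution_def)

lemma in_D_imp_pos:
  assumes "in_D f"
  shows "AE x in lborel. 0 < x \<and> x < 1 \<longrightarrow> 0 < f x"
proof -
  obtain F where "AE x in lborel. 0 < x \<and> x < 1 \<longrightarrow> f x = F x" "\<forall>x. 0 < x \<and> x < 1 \<longrightarrow> 0 < F x"
    using assms by (auto simp: in_D_def V_rep_def)
  then show ?thesis by (auto elim!: AE_mp)
qed

lemma has_H_deriv_cong_AE:
  assumes deriv: "has_H_deriv u v t" and u: "\<And>s. sq_int (u s)"
    and vw: "set_borel_measurable lborel {0<..<1} v" "set_borel_measurable lborel {0<..<1} w"
    and ae: "AE x in lborel. 0 < x \<and> x < 1 \<longrightarrow> v x = w x"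
  shows "has_H_deriv u w t"
proof -
  have [measurable]: "u s \<in> borel_measurable (restrict_space lborel {0<..<1})" for s
    using u by (rule sq_int_measurable)
  have [measurable]: "v \<in> borel_measurable (restrict_space lborel {0<..<1})"
    "w \<in> borel_measurable (restrict_space lborel {0<..<1})"
    using vw by (simp_all add: set_borel_measurable_Ioo_iff)
  have "L2nrm (\<lambda>x. (u s x - u t x) / (s - t) - v x) = L2nrm (\<lambda>x. (u s x - u t x) / (s - t) - w x)" for s
    using ae by (intro L2nrm_cong_AE) (auto simp: set_borel_measurable_Ioo_iff elim!: AE_mp intro!: AE_I2)
  then show ?thesis
    using deriv by (simp add: has_H_deriv_def)
qed

lemma torsion_moment_affine:
  assumes f: "sq_int f" and h: "sq_int h"
  shows "torsion_moment (\<lambda>x. \<beta> + w * f x + h x) = \<beta> / 6 + w * torsion_moment f + torsion_moment h"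
proof -
  have "set_integrable lborel {0<..<1} (\<lambda>x. g x * torsion x)" if "sq_int g" for g
    using that borel_measurable_torsion torsion_bounds by (intro sq_int_set_integrable_mult_bounded) auto
  note int = this[OF sq_int_const] this[OF f] this[OF h]
  show ?thesis
    unfolding torsion_moment_def using int set_integral_torsion
    by (simp add: distrib_right set_integral_add set_integral_mult_right mult.assoc)
qed

lemma torsion_moment_nonneg: "in_D f \<Longrightarrow> 0 \<le> torsion_moment f"
  unfolding torsion_moment_def set_integral_Ioo_eq_restrict_space
  using torsion_bounds by (intro integral_nonneg_AE) (auto simp: AE_restrict_space_iff elim!: AE_mp dest!: in_D_imp_pos)

lemma torsion_moment_has_derivative_in_D:
  assumes u: "\<And>s. sq_int (u s)" and "in_D (u t)" and DA: "DA_lap (u t) h"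
    and r: "r \<in> borel_measurable lborel"
    and r_eq: "AE x in lborel. 0 < x \<and> x < 1 \<longrightarrow> (\<exists>y. Hsign (u t x) y \<and> r x = \<beta> * y + w * u t x)"
    and deriv: "has_H_deriv u (\<lambda>x. r x + h x) t"
  shows "((\<lambda>s. torsion_moment (u s)) has_real_derivative
    \<beta> / 6 + w * torsion_moment (u t) - 2 * (LBINT x:{0<..<1}. u t x)) (at t)"
proof -
  have h: "sq_int h" using DA by (simp add: DA_lap_def)
  \<comment> \<open>where \<open>u t > 0\<close> the Heaviside graph is single valued, so \<open>r = \<beta> + w u t\<close> there\<close>
  have ae: "AE x in lborel. 0 < x \<and> x < 1 \<longrightarrow> r x + h x = \<beta> + w * u t x + h x"
    using r_eq in_D_imp_pos[OF \<open>in_D (u t)\<close>] by eventually_elim (auto simp: Hsign_def)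
  have "sq_int (\<lambda>x. \<beta> + w * u t x)"
    using sq_int_lincomb[OF sq_int_const u, of 1 \<beta> w t] by simp
  then have v: "sq_int (\<lambda>x. \<beta> + w * u t x + h x)"
    using h by (rule sq_int_add)
  have rh: "set_borel_measurable lborel {0<..<1} (\<lambda>x. r x + h x)"
  proof -
    have [measurable]: "h \<in> borel_measurable (restrict_space lborel {0<..<1})"
      "r \<in> borel_measurable (restrict_space lborel {0<..<1})"
      using sq_int_measurable[OF h] measurable_restrict_space1[OF r] by auto
    show ?thesis unfolding set_borel_measurable_Ioo_iff by measurable
  qed
  have "has_H_deriv u (\<lambda>x. \<beta> + w * u t x + h x) t"
    by (rule has_H_deriv_cong_AE[OF deriv u rh _ ae]) (use v in \<open>simp add: sq_int_def\<close>)
  from has_H_deriv_pairing[OF u v this borel_measurable_torsion, of 1]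
  have "((\<lambda>s. torsion_moment (u s)) has_real_derivative
      torsion_moment (\<lambda>x. \<beta> + w * u t x + h x)) (at t)"
    using torsion_bounds by (simp add: torsion_moment_def)
  then show ?thesis
    by (simp add: torsion_moment_affine[OF u h] DA_lap_torsion[OF DA u])
qed

lemma is_solution_torsion_moment_has_derivative:
  assumes sol: "is_solution b \<omega> \<tau> u\<^sub>\<tau> u" and u: "\<And>s. sq_int (u s)"
  shows "AE t in lborel. \<tau> < t \<longrightarrow> in_D (u t) \<longrightarrow>
    ((\<lambda>s. torsion_moment (u s)) has_real_derivative
      b t / 6 + \<omega> t * torsion_moment (u t) - 2 * (LBINT x:{0<..<1}. u t x)) (at t)"
proof -
  obtain r where r: "L2loc_H \<tau> r"
    and r_eq: "AE t in lborel. \<tau> < t \<longrightarrow> (AE x in lborel. 0 < x \<and> x < 1 \<longrightarrow>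
        (\<exists>y. Hsign (u t x) y \<and> r t x = b t * y + \<omega> t * u t x))"
    and deriv: "AE t in lborel. \<tau> < t \<longrightarrow> (\<exists>h. DA_lap (u t) h \<and> has_H_deriv u (\<lambda>x. r t x + h x) t)"
    using sol unfolding is_solution_def by blast
  have "(\<lambda>(t, x). r t x) \<in> borel_measurable (lborel \<Otimes>\<^sub>M lborel)"
    using r by (simp add: L2loc_H_def)
  from measurable_Pair2[OF this] have r_meas: "r t \<in> borel_measurable lborel" for t
    by simp
  from r_eq deriv show ?thesis
  proof eventually_elim
    case (elim t)
    show ?case
    proof (intro impI)
      assume "\<tau> < t" "in_D (u t)"
      with elim obtain h where "DA_lap (u t) h" "has_H_deriv u (\<lambda>x. r t x + h x) t"
        by blast
      with elim \<open>\<tau> < t\<close> \<open>in_D (u t)\<close> show "((\<lambda>s. torsion_moment (u s)) has_real_derivative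
          b t / 6 + \<omega> t * torsion_moment (u t) - 2 * (LBINT x:{0<..<1}. u t x)) (at t)"
        by (intro torsion_moment_has_derivative_in_D[OF u _ _ r_meas]) auto
    qed
  qed
qed

lemma set_integral_le_L2nrm: "sq_int f \<Longrightarrow> (LBINT x:{0<..<1}. f x) \<le> L2nrm f"
  using abs_set_integral_mult_le_L2nrm[of f "\<lambda>_. 1" 1] by simp

lemma complete_traj_torsion_moment_abs_continuous:
  assumes "complete_traj b \<omega> \<gamma>" "a < c"
  shows "abs_continuous_on a c (\<lambda>t. torsion_moment (\<gamma> t))"
  unfolding torsion_moment_def
proof (rule abs_continuous_on_pairing[OF _ _ borel_measurable_torsion])
  have "is_solution b \<omega> (a - 1) (\<gamma> (a - 1)) \<gamma>"
    using assms(1) by (simp add: complete_traj_def)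
  then show "H_abs_cont \<gamma> a c"
    using assms(2) by (simp add: is_solution_def)
  show "sq_int (\<gamma> s)" for s
    using assms(1) by (rule complete_traj_sq_int)
qed (use torsion_bounds in auto)

theorem complete_traj_leaves_D:
  fixes b \<omega> :: "real \<Rightarrow> real" and \<gamma> :: "real \<Rightarrow> real \<Rightarrow> real"
  assumes "0 < b0" and b: "\<And>t. b0 \<le> b t" and \<omega>: "\<And>t. 0 \<le> \<omega> t"
    and \<gamma>: "complete_traj b \<omega> \<gamma>" and lim: "((\<lambda>t. L2nrm (\<gamma> t)) \<longlongrightarrow> 0) at_bot"
  shows "\<exists>t0\<le>t1. \<not> in_D (\<gamma> t0)"
proof (rule ccontr)
  assume "\<not> ?thesis"
  then have in_D: "\<And>t. t \<le> t1 \<Longrightarrow> in_D (\<gamma> t)" by auto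
  have sq: "\<And>t. sq_int (\<gamma> t)"
    using \<gamma> by (rule complete_traj_sq_int)
  define Y where "Y t = torsion_moment (\<gamma> t)" for t
  have Y_nonneg: "0 \<le> Y t" if "t \<le> t1" for t
    unfolding Y_def using in_D[OF that] by (rule torsion_moment_nonneg)
  obtain T where "T \<le> t1" and small: "\<And>t. t \<le> T \<Longrightarrow> L2nrm (\<gamma> t) < b0 / 24"
  proof -
    have "0 < b0 / 24" using \<open>0 < b0\<close> by simp
    then have "\<forall>\<^sub>F t in at_bot. L2nrm (\<gamma> t) < b0 / 24"
      by (rule order_tendstoD(2)[OF lim])
    then obtain N where "\<And>t. t \<le> N \<Longrightarrow> L2nrm (\<gamma> t) < b0 / 24"
      by (auto simp: eventually_at_bot_linorder)
    then show ?thesis using that[of "min N t1"] by auto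
  qed
  \<comment> \<open>far enough in the past, the growth rate \<open>b0 / 12\<close> of \<open>Y\<close> would force \<open>Y\<close> negative\<close>
  define s0 where "s0 = T - 1 - 12 * \<bar>Y T\<bar> / b0"
  have "0 \<le> 12 * \<bar>Y T\<bar> / b0" using \<open>0 < b0\<close> by simp
  then have "s0 < T" by (simp add: s0_def)
  have "is_solution b \<omega> (s0 - 1) (\<gamma> (s0 - 1)) \<gamma>"
    using \<gamma> by (simp add: complete_traj_def)
  from is_solution_torsion_moment_has_derivative[OF this sq]
  have "AE t in lborel. s0 < t \<and> t < T \<longrightarrow> (\<exists>d\<ge>b0 / 12. (Y has_real_derivative d) (at t))"
  proof eventually_elim
    case (elim t)
    show ?case
    proof
      assume t: "s0 < t \<and> t < T"
      have "(LBINT x:{0<..<1}. \<gamma> t x) < b0 / 24"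
        using set_integral_le_L2nrm[OF sq] small t by (meson less_imp_le order.strict_trans1)
      moreover have "0 \<le> \<omega> t * Y t"
        using \<omega>[of t] Y_nonneg[of t] t \<open>T \<le> t1\<close> by simp
      ultimately have "b0 / 12 \<le> b t / 6 + \<omega> t * Y t - 2 * (LBINT x:{0<..<1}. \<gamma> t x)"
        using b[of t] by linarith
      moreover have "(Y has_real_derivative b t / 6 + \<omega> t * Y t - 2 * (LBINT x:{0<..<1}. \<gamma> t x)) (at t)"
        using elim t in_D[of t] \<open>T \<le> t1\<close> by (simp add: Y_def[abs_def])
      ultimately show "\<exists>d\<ge>b0 / 12. (Y has_real_derivative d) (at t)" by blast
    qed
  qed
  then have "b0 / 12 * (T - s0) \<le> Y T - Y s0"
    using \<open>s0 < T\<close> complete_traj_torsion_moment_abs_continuous[OF \<gamma> \<open>s0 < T\<close>]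
    by (intro abs_continuous_on_deriv_lower_bound) (auto simp: Y_def[abs_def])
  moreover have "b0 / 12 * (T - s0) = b0 / 12 + \<bar>Y T\<bar>"
    using \<open>0 < b0\<close> by (simp add: s0_def field_simps)
  ultimately show False
    using Y_nonneg[of s0] \<open>s0 < T\<close> \<open>T \<le> t1\<close> \<open>0 < b0\<close> by linarith
qed

theorem corollary5:
  fixes b \<omega> :: "real \<Rightarrow> real" and b0 b1 \<omega>0 \<omega>1 :: real
  assumes "continuous_on UNIV b" and "continuous_on UNIV \<omega>"
    and "0 < b0" and "\<forall>t. b0 \<le> b t \<and> b t \<le> b1"
    and "0 \<le> \<omega>0" and "\<forall>t. \<omega>0 \<le> \<omega> t \<and> \<omega> t \<le> \<omega>1" and "\<omega>1 < pi\<^sup>2"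
  shows "(\<forall>\<gamma>. complete_traj b \<omega> \<gamma> \<and> nonneg_traj \<gamma> \<and> bounded_traj \<gamma>
            \<and> ((\<lambda>t. L2nrm (\<gamma> t)) \<longlongrightarrow> 0) at_bot
           \<longrightarrow> (\<forall>t1. \<exists>t0\<le>t1. \<not> in_D (\<gamma> t0)))
       \<and> (W12loc b \<and> W12loc \<omega> \<longrightarrow>
          (\<forall>\<gamma>. complete_traj b \<omega> \<gamma> \<and> bounded_traj \<gamma>
            \<and> ((\<lambda>t. L2nrm (\<gamma> t)) \<longlongrightarrow> 0) at_bot
           \<longrightarrow> (\<forall>t1. \<exists>t0\<le>t1. \<not> in_D (\<gamma> t0))))"
proof -
  have "\<And>t. b0 \<le> b t" "\<And>t. 0 \<le> \<omega> t"
    using assms(4-6) by (auto intro: order_trans)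
  with \<open>0 < b0\<close> show ?thesis
    using complete_traj_leaves_D by blast
qed

end
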